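(* Let $n\ge k\ge 2$ and let $\Sigma\subset\mathbb{R}$ be a finite set. If $M$ is a $k\times n$ real matrix with all entries in $\Sigma$ such that every $k\times k$ submatrix formed by $k$ of its columns is nonsingular, then $|\Sigma|\ge\sqrt{n/k}$. *)

theory Defs
  imports Complex_Main "Jordan_Normal_Form.Determinant"
begin

(* A k x n real matrix M is represented as  M :: nat => nat => real, entry (i,j) for i<k, j<n.
   The k x k submatrix formed by columns c 0, ..., c (k-1)  (c injective into {..<n}). *)
definition col_submatrix :: "nat \<Rightarrow> (nat \<Rightarrow> nat \<Rightarrow> real) \<Rightarrow> (nat \<Rightarrow> nat) \<Rightarrow> real mat" where
  "col_submatrix k M c = mat k k (\<lambda>(i,j). M i (c j))"

end

theory Submission
  imports Defs
begin

text \<open>If k of the columns agreed in their first two entries, the k x k matrix they form would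
  have two constant rows and hence determinant zero. So each of the at most |\<Sigma>|^2 possible
  pairs of top entries occurs in fewer than k columns, giving n \<le> k |\<Sigma>|^2.\<close>

lemma det_zero_row:
  fixes A :: "'a :: comm_ring_1 mat"
  assumes A: "A \<in> carrier_mat n n" and r: "r < n"
    and zero: "\<And>j. j < n \<Longrightarrow> A $$ (r, j) = 0"
  shows "det A = 0"
proof -
  have "multrow r 0 A = A"
    using A zero by (intro eq_matI) auto
  then show ?thesis
    using det_multrow[OF r A, of 0] by simp
qed

lemma det_two_constant_rows:
  fixes A :: "'a :: field mat"
  assumes A: "A \<in> carrier_mat n n" and r: "r < n" and s: "s < n" and "r \<noteq> s"
    and row_r: "\<And>j. j < n \<Longrightarrow> A $$ (r, j) = a"
    and row_s: "\<And>j. j < n \<Longrightarrow> A $$ (s, j) = b"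
  shows "det A = 0"
proof (cases "a = 0")
  case True
  then show ?thesis using det_zero_row[OF A r] row_r by simp
next
  case False
  let ?B = "addrow (- b / a) s r A"
  have "det A = det ?B"
    using det_addrow[OF r \<open>r \<noteq> s\<close>[symmetric] A] by simp
  also have "det ?B = 0"
    by (rule det_zero_row[OF _ s]) (use A row_r row_s r s False in auto)
  finally show ?thesis .
qed

lemma card_le_card_image_mult:
  assumes "finite B" and "f ` A \<subseteq> B"
    and fibres: "\<And>b. b \<in> B \<Longrightarrow> card {x \<in> A. f x = b} \<le> m"
  shows "card A \<le> card B * m"
proof -
  have "A = (\<Union>b\<in>B. {x \<in> A. f x = b})"
    using \<open>f ` A \<subseteq> B\<close> by auto
  then have "card A \<le> (\<Sum>b\<in>B. card {x \<in> A. f x = b})"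
    using card_UN_le[OF \<open>finite B\<close>] by metis
  also have "\<dots> \<le> (\<Sum>b\<in>B. m)"
    by (rule sum_mono) (rule fibres)
  finally show ?thesis by simp
qed

lemma card_columns_with_equal_top_entries_less:
  fixes M :: "nat \<Rightarrow> nat \<Rightarrow> real"
  assumes "2 \<le> k"
    and nonsingular: "\<And>c. c ` {..<k} \<subseteq> {..<n} \<Longrightarrow> inj_on c {..<k} \<Longrightarrow>
           det (col_submatrix k M c) \<noteq> 0"
  shows "card {j. j < n \<and> (M 0 j, M 1 j) = (a, b)} < k"
proof (rule ccontr)
  let ?J = "{j. j < n \<and> (M 0 j, M 1 j) = (a, b)}"
  assume "\<not> card ?J < k"
  then obtain T where T: "T \<subseteq> ?J" "card T = k"
    by (meson not_less obtain_subset_with_card_n)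
  then have "finite T"
    using assms(1) card.infinite by fastforce
  then obtain c where c: "bij_betw c {..<k} T"
    using ex_bij_betw_nat_finite T(2) lessThan_atLeast0 by metis
  then have "c ` {..<k} \<subseteq> {..<n}" "inj_on c {..<k}"
    using T(1) by (auto simp: bij_betw_def)
  moreover have "det (col_submatrix k M c) = 0"
  proof (rule det_two_constant_rows)
    show "col_submatrix k M c $$ (0, j) = a" "col_submatrix k M c $$ (1, j) = b" if "j < k" for j
      using that bij_betwE[OF c] T(1) assms(1) by (auto simp: col_submatrix_def)
  qed (use assms(1) in \<open>auto simp: col_submatrix_def\<close>)
  ultimately show False
    using nonsingular by blast
qed

theorem claim1p4:
  fixes k n :: nat and \<Sigma> :: "real set" and M :: "nat \<Rightarrow> nat \<Rightarrow> real"
  assumes "2 \<le> k" and "k \<le> n"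
    and "finite \<Sigma>"
    and "\<And>i j. i < k \<Longrightarrow> j < n \<Longrightarrow> M i j \<in> \<Sigma>"
    and "\<And>c. c ` {..<k} \<subseteq> {..<n} \<Longrightarrow> inj_on c {..<k} \<Longrightarrow>
           det (col_submatrix k M c) \<noteq> 0"
  shows "real (card \<Sigma>) \<ge> sqrt (real n / real k)"
proof -
  have "card {..<n} \<le> card (\<Sigma> \<times> \<Sigma>) * k"
  proof (rule card_le_card_image_mult[where f = "\<lambda>j. (M 0 j, M 1 j)"])
    show "(\<lambda>j. (M 0 j, M 1 j)) ` {..<n} \<subseteq> \<Sigma> \<times> \<Sigma>"
      using assms(1,4) by auto
    show "card {j \<in> {..<n}. (M 0 j, M 1 j) = p} \<le> k" for p
      using card_columns_with_equal_top_entries_less[where n = n and a = "fst p" and b = "snd p", OF assms(1,5)]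
      by simp
  qed (use assms(3) in auto)
  then have "n \<le> card \<Sigma> ^ 2 * k"
    by (simp add: card_cartesian_product power2_eq_square)
  then have "real n \<le> real (card \<Sigma>) ^ 2 * real k"
    by (metis of_nat_le_iff of_nat_mult of_nat_power)
  then have "real n / real k \<le> real (card \<Sigma>) ^ 2"
    using assms(1) by (simp add: divide_le_eq)
  then show ?thesis
    by (rule real_le_lsqrt[rotated]) simp
qed

end
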